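(* For every $n\ge5$, the Johnson graph $J(n,2)$ and the Kneser graph $K(n,2)$ have no quantum symmetry.
   Context: $J(n,2)$ has as vertices the $2$-element subsets of $\{1,\dots,n\}$, two vertices adjacent iff the subsets intersect in exactly one element. $K(n,2)$ has the same vertices, two vertices adjacent iff the subsets are disjoint. For a finite simple undirected graph $\Gamma=(V,E)$ with $V=\{1,\dots,N\}$, $C(G_{aut}^+(\Gamma))$ is the universal unital $C^*$-algebra generated by $u_{ij}$, $1\le i,j\le N$, with relations: (R1) $u_{ij}=u_{ij}^*=u_{ij}^2$; (R2) $\sum_{l} u_{il}=1=\sum_{l} u_{li}$ for all $i$; (R3) $u_{ij}u_{kl}=u_{kl}u_{ij}=0$ whenever exactly one of $(i,k)\in E$, $(j,l)\in E$ holds. $\Gamma$ has no quantum symmetry if $C(G_{aut}^+(\Gamma))$ is commutative. *)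

theory Defs
  imports "HOL-Analysis.Analysis"
begin

text \<open>The ring structure
  (with unit 1, 1 \<noteq> 0) comes from the type class ring_1; complex scalar multiplication,
  involution and norm are explicit parameters.\<close>

locale unital_cstar_algebra =
  fixes smult :: "complex \<Rightarrow> 'a::ring_1 \<Rightarrow> 'a"
    and invol :: "'a \<Rightarrow> 'a"
    and nrm :: "'a \<Rightarrow> real"
  assumes smult_add_right: "\<And>c x y. smult c (x + y) = smult c x + smult c y"
    and smult_add_left: "\<And>c d x. smult (c + d) x = smult c x + smult d x"
    and smult_smult: "\<And>c d x. smult c (smult d x) = smult (c * d) x"
    and smult_one: "\<And>x. smult 1 x = x"
    and smult_mult_left: "\<And>c x y. smult c x * y = smult c (x * y)"
    and smult_mult_right: "\<And>c x y. x * smult c y = smult c (x * y)"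
    and nrm_eq_zero: "\<And>x. nrm x = 0 \<longleftrightarrow> x = 0"
    and nrm_triangle: "\<And>x y. nrm (x + y) \<le> nrm x + nrm y"
    and nrm_smult: "\<And>c x. nrm (smult c x) = cmod c * nrm x"
    and nrm_mult: "\<And>x y. nrm (x * y) \<le> nrm x * nrm y"
    and complete: "\<And>X. (\<forall>e>0. \<exists>N. \<forall>m\<ge>N. \<forall>k\<ge>N. nrm (X m - X k) < e)
                      \<Longrightarrow> (\<exists>L. (\<lambda>k. nrm (X k - L)) \<longlonglongrightarrow> 0)"
    and invol_invol: "\<And>x. invol (invol x) = x"
    and invol_add: "\<And>x y. invol (x + y) = invol x + invol y"
    and invol_smult: "\<And>c x. invol (smult c x) = smult (cnj c) (invol x)"
    and invol_mult: "\<And>x y. invol (x * y) = invol y * invol x"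
    and cstar_identity: "\<And>x. nrm (invol x * x) = nrm x ^ 2"

definition qaut_relations ::
  "('a::ring_1 \<Rightarrow> 'a) \<Rightarrow> 'v set \<Rightarrow> ('v \<Rightarrow> 'v \<Rightarrow> bool) \<Rightarrow> ('v \<Rightarrow> 'v \<Rightarrow> 'a) \<Rightarrow> bool" where
  "qaut_relations invol V E u \<longleftrightarrow>
     (\<forall>i\<in>V. \<forall>j\<in>V. u i j = invol (u i j) \<and> u i j = u i j * u i j) \<and>
     (\<forall>i\<in>V. (\<Sum>l\<in>V. u i l) = 1 \<and> (\<Sum>l\<in>V. u l i) = 1) \<and>
     (\<forall>i\<in>V. \<forall>j\<in>V. \<forall>k\<in>V. \<forall>l\<in>V. E i k \<noteq> E j l \<longrightarrow>
        u i j * u k l = 0 \<and> u k l * u i j = 0)"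

text \<open>No quantum symmetry: C(G_aut^+) is commutative, i.e. (universal property) in every
  unital C*-algebra (carried by the type 'a) any family satisfying the relations
  consists of pairwise commuting elements.  The theorem is stated schematically in 'a,
  hence for all unital C*-algebras.\<close>

definition no_quantum_symmetry ::
  "'a::ring_1 itself \<Rightarrow> 'v set \<Rightarrow> ('v \<Rightarrow> 'v \<Rightarrow> bool) \<Rightarrow> bool" where
  "no_quantum_symmetry (_ :: 'a itself) V E \<longleftrightarrow>
     (\<forall>(smult :: complex \<Rightarrow> 'a \<Rightarrow> 'a) invol nrm (u :: 'v \<Rightarrow> 'v \<Rightarrow> 'a).
        unital_cstar_algebra smult invol nrm \<longrightarrow> qaut_relations invol V E u \<longrightarrow>
        (\<forall>i\<in>V. \<forall>j\<in>V. \<forall>k\<in>V. \<forall>l\<in>V. u i j * u k l = u k l * u i j))"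

definition two_subsets :: "nat \<Rightarrow> nat set set" where
  "two_subsets n = {S. S \<subseteq> {1..n} \<and> card S = 2}"

definition johnson_adj :: "nat set \<Rightarrow> nat set \<Rightarrow> bool" where
  "johnson_adj S T \<longleftrightarrow> card (S \<inter> T) = 1"

definition kneser_adj :: "nat set \<Rightarrow> nat set \<Rightarrow> bool" where
  "kneser_adj S T \<longleftrightarrow> S \<inter> T = {}"

end

theory Submission
  imports Defs
begin

text \<open>
  Let u be a magic unitary respecting the adjacency of J(n,2).  For distinct vertices j, j' some
  vertex is adjacent to j but not to j', so by (R3) the entries of each row and of each column
  of u are orthogonal.  Summing the entries u S T over S \<ni> a and T \<ni> c, and using that u
  commutes with the adjacency matrix, gives elements v a c (the quantum permutation of the n
  points underlying u) such that v a c + v b c is the sum of the u {a,b} T over T \<ni> c, a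
  projection.  Since the columns of v sum to 1 and n \<ge> 5, each column of v consists of
  orthogonal idempotents, and by transposition so does each row.  Now
  u {a,b} {c,d} = (v a c + v b c) (v a d + v b d), and comparing this with u {a,b} {d,c} shows
  that the v a c commute pairwise, hence so do the entries of u.  Finally K(n,2) is the
  complement of J(n,2), and a magic unitary with orthogonal rows and columns respects a graph
  if and only if it respects its complement.
\<close>

section \<open>Two-element subsets\<close>

lemma mem_two_subsets_iff:
  "S \<in> two_subsets n \<longleftrightarrow> (\<exists>a b. a \<noteq> b \<and> a \<in> {1..n} \<and> b \<in> {1..n} \<and> S = {a, b})"
proof
  assume "S \<in> two_subsets n"
  then obtain a b where "a \<noteq> b" "S = {a, b}" "S \<subseteq> {1..n}"
    unfolding two_subsets_def by (auto simp: card_2_iff)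
  then show "\<exists>a b. a \<noteq> b \<and> a \<in> {1..n} \<and> b \<in> {1..n} \<and> S = {a, b}" by blast
qed (auto simp: two_subsets_def)

lemma doubleton_mem_two_subsets:
  "a \<noteq> b \<Longrightarrow> a \<in> {1..n} \<Longrightarrow> b \<in> {1..n} \<Longrightarrow> {a, b} \<in> two_subsets n"
  by (auto simp: mem_two_subsets_iff)

lemma two_subsetsD: "S \<in> two_subsets n \<Longrightarrow> S \<subseteq> {1..n} \<and> finite S \<and> card S = 2"
  unfolding two_subsets_def by (auto intro: finite_subset)

lemma finite_two_subsets: "finite (two_subsets n)"
  unfolding two_subsets_def by (rule finite_subset[of _ "Pow {1..n}"]) auto

lemma bij_betw_star:
  assumes "a \<in> {1..n}"
  shows "bij_betw (\<lambda>b. {a, b}) ({1..n} - {a}) {S \<in> two_subsets n. a \<in> S}"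
proof (rule bij_betw_imageI)
  show "inj_on (\<lambda>b. {a, b}) ({1..n} - {a})"
    by (auto simp: inj_on_def doubleton_eq_iff)
  show "(\<lambda>b. {a, b}) ` ({1..n} - {a}) = {S \<in> two_subsets n. a \<in> S}"
  proof (intro equalityI subsetI)
    fix S assume "S \<in> {S \<in> two_subsets n. a \<in> S}"
    then obtain x y where "x \<noteq> y" "x \<in> {1..n}" "y \<in> {1..n}" "S = {x, y}" "a \<in> S"
      by (auto simp: mem_two_subsets_iff)
    then show "S \<in> (\<lambda>b. {a, b}) ` ({1..n} - {a})"
      by (auto simp: insert_commute)
  qed (use assms in \<open>auto intro: doubleton_mem_two_subsets\<close>)
qed

lemma sum_star:
  assumes "a \<in> {1..n}"
  shows "(\<Sum>S\<in>two_subsets n. if a \<in> S then f S else 0) = (\<Sum>b\<in>{1..n} - {a}. f {a, b})"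
proof -
  have "(\<Sum>S\<in>two_subsets n. if a \<in> S then f S else 0) = (\<Sum>S\<in>{S \<in> two_subsets n. a \<in> S}. f S)"
    by (simp add: sum.inter_filter finite_two_subsets)
  also have "\<dots> = (\<Sum>b\<in>{1..n} - {a}. f {a, b})"
    using sum.reindex_bij_betw[OF bij_betw_star[OF assms], of f] by simp
  finally show ?thesis .
qed

lemma card_star_johnson_adj:
  assumes c: "c \<in> {1..n}" and T: "T \<in> two_subsets n"
  shows "card {S \<in> two_subsets n. c \<in> S \<and> johnson_adj S T} = (if c \<in> T then n - 2 else 2)"
proof -
  let ?B = "{b \<in> {1..n} - {c}. johnson_adj {c, b} T}"
  have "{S \<in> two_subsets n. c \<in> S \<and> johnson_adj S T} = {S \<in> {S \<in> two_subsets n. c \<in> S}. johnson_adj S T}"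
    by auto
  also have "\<dots> = {S \<in> (\<lambda>b. {c, b}) ` ({1..n} - {c}). johnson_adj S T}"
    using bij_betw_imp_surj_on[OF bij_betw_star[OF c]] by simp
  also have "\<dots> = (\<lambda>b. {c, b}) ` ?B" by auto
  finally have "{S \<in> two_subsets n. c \<in> S \<and> johnson_adj S T} = (\<lambda>b. {c, b}) ` ?B" .
  moreover have "inj_on (\<lambda>b. {c, b}) ?B"
    by (auto simp: inj_on_def doubleton_eq_iff)
  ultimately have card_eq: "card {S \<in> two_subsets n. c \<in> S \<and> johnson_adj S T} = card ?B"
    by (simp add: card_image)
  obtain x y where xy: "x \<noteq> y" "x \<in> {1..n}" "y \<in> {1..n}" "T = {x, y}"
    using T by (auto simp: mem_two_subsets_iff)
  show ?thesis
  proof (cases "c \<in> T")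
    case True
    then obtain w where w: "T = {c, w}" "w \<noteq> c" "w \<in> {1..n}"
      using xy by (auto simp: insert_commute)
    have "johnson_adj {c, b} T \<longleftrightarrow> b \<noteq> w" if "b \<noteq> c" for b
      using w that by (cases "b = w") (auto simp: johnson_adj_def Int_insert_left Int_insert_right)
    then have "?B = {1..n} - {c, w}" by auto
    moreover have "card ({1..n} - {c, w}) = n - 2"
      using w c by (subst card_Diff_subset) auto
    ultimately show ?thesis using True card_eq by simp
  next
    case False
    have "johnson_adj {c, b} T \<longleftrightarrow> b \<in> T" if "b \<noteq> c" for b
      using xy False that by (auto simp: johnson_adj_def Int_insert_left Int_insert_right)
    then have "?B = {x, y}" using xy False by auto
    then show ?thesis using False card_eq xy by simp
  qed
qed

lemma symp_johnson_adj: "symp johnson_adj"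
  by (simp add: symp_def johnson_adj_def Int_commute)

lemma symp_kneser_adj: "symp kneser_adj"
  by (simp add: symp_def kneser_adj_def Int_commute)

lemma johnson_adj_irrefl: "S \<in> two_subsets n \<Longrightarrow> \<not> johnson_adj S S"
  by (simp add: johnson_adj_def two_subsets_def)

lemma kneser_adj_irrefl: "S \<in> two_subsets n \<Longrightarrow> \<not> kneser_adj S S"
  by (auto simp: kneser_adj_def two_subsets_def)

lemma johnson_adj_iff_not_kneser_adj:
  assumes S: "S \<in> two_subsets n" and T: "T \<in> two_subsets n" and "S \<noteq> T"
  shows "johnson_adj S T \<longleftrightarrow> \<not> kneser_adj S T"
proof -
  have fin: "finite S" "card S = 2" "finite T" "card T = 2"
    using two_subsetsD[OF S] two_subsetsD[OF T] by auto
  have "card (S \<inter> T) \<le> 2"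
    using fin by (metis card_mono inf_le1)
  moreover have "card (S \<inter> T) \<noteq> 2"
    using fin \<open>S \<noteq> T\<close> by (metis card_subset_eq inf_le1 inf_le2)
  moreover have "card (S \<inter> T) = 0 \<longleftrightarrow> S \<inter> T = {}"
    using fin by simp
  ultimately show ?thesis
    unfolding johnson_adj_def kneser_adj_def by linarith
qed

lemma ex_point_outside_two_subsets:
  assumes "5 \<le> n" and S: "S \<in> two_subsets n" and T: "T \<in> two_subsets n"
  shows "\<exists>e\<in>{1..n}. e \<notin> S \<and> e \<notin> T"
proof (rule ccontr)
  assume "\<not> ?thesis"
  then have "{1..n} \<subseteq> S \<union> T" by auto
  then have "card {1..n} \<le> card (S \<union> T)"
    using two_subsetsD[OF S] two_subsetsD[OF T] by (intro card_mono) auto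
  also have "\<dots> \<le> card S + card T" by (rule card_Un_le)
  finally show False
    using \<open>5 \<le> n\<close> two_subsetsD[OF S] two_subsetsD[OF T] by simp
qed

lemma ex_point_in_diff_two_subsets:
  assumes S: "S \<in> two_subsets n" and T: "T \<in> two_subsets n" and "S \<noteq> T"
  shows "\<exists>a\<in>S. a \<notin> T"
proof (rule ccontr)
  assume "\<not> ?thesis"
  then have "S \<subseteq> T" by blast
  then show False
    using two_subsetsD[OF S] two_subsetsD[OF T] \<open>S \<noteq> T\<close> by (metis card_subset_eq)
qed

lemma johnson_adj_separating:
  assumes "5 \<le> n" and S: "S \<in> two_subsets n" and T: "T \<in> two_subsets n" and "S \<noteq> T"
  shows "\<exists>R\<in>two_subsets n. johnson_adj S R \<and> \<not> johnson_adj R T"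
proof -
  obtain a where a: "a \<in> S" "a \<notin> T"
    using ex_point_in_diff_two_subsets[OF S T \<open>S \<noteq> T\<close>] by blast
  obtain e where e: "e \<in> {1..n}" "e \<notin> S" "e \<notin> T"
    using ex_point_outside_two_subsets[OF \<open>5 \<le> n\<close> S T] by blast
  have "{a, e} \<in> two_subsets n"
    using a e two_subsetsD[OF S] by (intro doubleton_mem_two_subsets) auto
  moreover have "S \<inter> {a, e} = {a}" "{a, e} \<inter> T = {}"
    using a e by auto
  ultimately show ?thesis
    unfolding johnson_adj_def by (intro bexI[of _ "{a, e}"]) auto
qed

lemma kneser_adj_separating:
  assumes "5 \<le> n" and S: "S \<in> two_subsets n" and T: "T \<in> two_subsets n" and "S \<noteq> T"
  shows "\<exists>R\<in>two_subsets n. kneser_adj S R \<and> \<not> kneser_adj R T"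
proof -
  obtain c where c: "c \<in> T" "c \<notin> S"
    using ex_point_in_diff_two_subsets[OF T S] \<open>S \<noteq> T\<close> by metis
  obtain e where e: "e \<in> {1..n}" "e \<notin> S" "e \<notin> T"
    using ex_point_outside_two_subsets[OF \<open>5 \<le> n\<close> S T] by blast
  have "{c, e} \<in> two_subsets n"
    using c e two_subsetsD[OF T] by (intro doubleton_mem_two_subsets) auto
  moreover have "S \<inter> {c, e} = {}" "c \<in> {c, e} \<inter> T"
    using c e by auto
  ultimately show ?thesis
    unfolding kneser_adj_def by (intro bexI[of _ "{c, e}"]) auto
qed

lemma pair_membership_johnson_adj:
  assumes "a \<noteq> b" and "S \<in> two_subsets n"
  shows "(if a \<in> S then y else 0) + (if b \<in> S then y else 0)
    = (if S = {a, b} then 2 * (y::'a::ring_1) else 0) + (if johnson_adj {a, b} S then y else 0)"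
proof -
  obtain x z where "x \<noteq> z" "S = {x, z}"
    using assms(2) by (auto simp: mem_two_subsets_iff)
  then show ?thesis
    using assms(1) by (auto simp: johnson_adj_def doubleton_eq_iff Int_insert_left Int_insert_right mult_2)
qed

section \<open>Magic unitaries compatible with a graph\<close>

text \<open>Self-adjointness of the entries is never needed, so (R1) and (R2) are weakened to
  idempotency and the row and column sums, and taken in an arbitrary ring.\<close>

definition magic_unitary :: "'v set \<Rightarrow> ('v \<Rightarrow> 'v \<Rightarrow> 'a::ring_1) \<Rightarrow> bool" where
  "magic_unitary V u \<longleftrightarrow>
     (\<forall>i\<in>V. \<forall>j\<in>V. u i j * u i j = u i j) \<and>
     (\<forall>i\<in>V. (\<Sum>l\<in>V. u i l) = 1 \<and> (\<Sum>l\<in>V. u l i) = 1)"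

definition adjacency_compatible :: "'v set \<Rightarrow> ('v \<Rightarrow> 'v \<Rightarrow> bool) \<Rightarrow> ('v \<Rightarrow> 'v \<Rightarrow> 'a::ring_1) \<Rightarrow> bool" where
  "adjacency_compatible V E u \<longleftrightarrow>
     (\<forall>i\<in>V. \<forall>j\<in>V. \<forall>k\<in>V. \<forall>l\<in>V. E i k \<noteq> E j l \<longrightarrow> u i j * u k l = 0)"

lemma qaut_relationsD:
  assumes "qaut_relations invol V E u"
  shows "magic_unitary V u" and "adjacency_compatible V E u"
  using assms unfolding qaut_relations_def magic_unitary_def adjacency_compatible_def
  by auto

lemma magic_unitary_idem: "magic_unitary V u \<Longrightarrow> i \<in> V \<Longrightarrow> j \<in> V \<Longrightarrow> u i j * u i j = u i j"
  by (simp add: magic_unitary_def)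

lemma magic_unitary_row_sum: "magic_unitary V u \<Longrightarrow> i \<in> V \<Longrightarrow> (\<Sum>j\<in>V. u i j) = 1"
  by (simp add: magic_unitary_def)

lemma magic_unitary_col_sum: "magic_unitary V u \<Longrightarrow> j \<in> V \<Longrightarrow> (\<Sum>i\<in>V. u i j) = 1"
  by (simp add: magic_unitary_def)

lemma magic_unitary_transpose: "magic_unitary V (\<lambda>i j. u j i) \<longleftrightarrow> magic_unitary V u"
  by (auto simp: magic_unitary_def)

lemma adjacency_compatibleD:
  "adjacency_compatible V E u \<Longrightarrow> i \<in> V \<Longrightarrow> j \<in> V \<Longrightarrow> k \<in> V \<Longrightarrow> l \<in> V \<Longrightarrow>
    E i k \<noteq> E j l \<Longrightarrow> u i j * u k l = 0"
  by (simp add: adjacency_compatible_def)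

lemma adjacency_compatible_transpose:
  "adjacency_compatible V E (\<lambda>i j. u j i) \<longleftrightarrow> adjacency_compatible V E u"
  unfolding adjacency_compatible_def by blast

lemma adjacency_compatible_row_orthogonal:
  assumes magic: "magic_unitary V u" and compat: "adjacency_compatible V E u" and "symp E"
    and separating: "\<And>v w. v \<in> V \<Longrightarrow> w \<in> V \<Longrightarrow> v \<noteq> w \<Longrightarrow> \<exists>x\<in>V. E v x \<and> \<not> E x w"
    and i: "i \<in> V" and j: "j \<in> V" and j': "j' \<in> V" and "j \<noteq> j'"
  shows "u i j * u i j' = 0"
proof -
  obtain x where x: "x \<in> V" "E j x" "\<not> E x j'"
    using separating[OF j j' \<open>j \<noteq> j'\<close>] by blast
  have "u i j * u i j' = u i j * (\<Sum>k\<in>V. u k x) * u i j'"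
    using magic_unitary_col_sum[OF magic x(1)] by simp
  also have "\<dots> = (\<Sum>k\<in>V. u i j * u k x * u i j')"
    by (simp add: sum_distrib_left sum_distrib_right)
  also have "\<dots> = 0"
  proof (rule sum.neutral, rule ballI)
    fix k assume k: "k \<in> V"
    show "u i j * u k x * u i j' = 0"
    proof (cases "E i k")
      case True
      then have "E k i \<noteq> E x j'"
        using x sympD[OF \<open>symp E\<close> True] by simp
      then show ?thesis
        using adjacency_compatibleD[OF compat k x(1) i j'] by (simp add: mult.assoc)
    next
      case False
      then show ?thesis
        using adjacency_compatibleD[OF compat i j k x(1)] x by simp
    qed
  qed
  finally show ?thesis .
qed

lemma adjacency_compatible_col_orthogonal:
  assumes "magic_unitary V u" and "adjacency_compatible V E u" and "symp E"
    and "\<And>v w. v \<in> V \<Longrightarrow> w \<in> V \<Longrightarrow> v \<noteq> w \<Longrightarrow> \<exists>x\<in>V. E v x \<and> \<not> E x w"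
    and "i \<in> V" and "i' \<in> V" and "j \<in> V" and "i \<noteq> i'"
  shows "u i j * u i' j = 0"
  using adjacency_compatible_row_orthogonal[of V "\<lambda>i j. u j i" E j i i',
      OF magic_unitary_transpose[THEN iffD2] adjacency_compatible_transpose[THEN iffD2]] assms
  by blast

lemma adjacency_compatible_complement:
  assumes compat: "adjacency_compatible V E u"
    and irrefl: "\<And>x. x \<in> V \<Longrightarrow> \<not> E x x" "\<And>x. x \<in> V \<Longrightarrow> \<not> E' x x"
    and complement: "\<And>x y. x \<in> V \<Longrightarrow> y \<in> V \<Longrightarrow> x \<noteq> y \<Longrightarrow> E' x y \<longleftrightarrow> \<not> E x y"
    and row_orthogonal: "\<And>i j j'. i \<in> V \<Longrightarrow> j \<in> V \<Longrightarrow> j' \<in> V \<Longrightarrow> j \<noteq> j' \<Longrightarrow> u i j * u i j' = 0"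
    and col_orthogonal: "\<And>i i' j. i \<in> V \<Longrightarrow> i' \<in> V \<Longrightarrow> j \<in> V \<Longrightarrow> i \<noteq> i' \<Longrightarrow> u i j * u i' j = 0"
  shows "adjacency_compatible V E' u"
  unfolding adjacency_compatible_def
proof (intro ballI impI)
  fix i j k l assume V: "i \<in> V" "j \<in> V" "k \<in> V" "l \<in> V" and ne: "E' i k \<noteq> E' j l"
  consider "i = k" | "j = l" | "i \<noteq> k" "j \<noteq> l" by blast
  then show "u i j * u k l = 0"
  proof cases
    case 1
    then have "j \<noteq> l" using ne irrefl(2) V by auto
    then show ?thesis using 1 row_orthogonal V by simp
  next
    case 2
    then have "i \<noteq> k" using ne irrefl(2) V by auto
    then show ?thesis using 2 col_orthogonal V by simp
  next
    case 3
    then have "E i k \<noteq> E j l" using ne complement V by auto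
    then show ?thesis using adjacency_compatibleD[OF compat V] by simp
  qed
qed

lemma adjacency_compatible_adjacency_commute:
  assumes magic: "magic_unitary V u" and compat: "adjacency_compatible V E u" and "symp E"
    and i: "i \<in> V" and j: "j \<in> V"
  shows "(\<Sum>i'\<in>V. if E i i' then u i' j else 0) = (\<Sum>j'\<in>V. if E j j' then u i j' else 0)"
proof -
  have vanish: "u i j' * u i' j = 0" if "i' \<in> V" "j' \<in> V" "E i i' \<noteq> E j j'" for i' j'
    using adjacency_compatibleD[OF compat i that(2,1) j] that(3) \<open>symp E\<close>
    by (metis sympD)
  let ?w = "\<lambda>i' j'. if E i i' \<and> E j j' then u i j' * u i' j else 0"
  have "(if E i i' then u i' j else 0) = (\<Sum>j'\<in>V. ?w i' j')" if i': "i' \<in> V" for i'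
  proof (cases "E i i'")
    case True
    have "u i' j = (\<Sum>j'\<in>V. u i j') * u i' j"
      using magic_unitary_row_sum[OF magic i] by simp
    also have "\<dots> = (\<Sum>j'\<in>V. ?w i' j')"
      unfolding sum_distrib_right using True vanish[OF i'] by (intro sum.cong) auto
    finally show ?thesis using True by simp
  qed simp
  moreover have "(if E j j' then u i j' else 0) = (\<Sum>i'\<in>V. ?w i' j')" if j': "j' \<in> V" for j'
  proof (cases "E j j'")
    case True
    have "u i j' = u i j' * (\<Sum>i'\<in>V. u i' j)"
      using magic_unitary_col_sum[OF magic j] by simp
    also have "\<dots> = (\<Sum>i'\<in>V. ?w i' j')"
      unfolding sum_distrib_left using True vanish[OF _ j'] by (intro sum.cong) auto
    finally show ?thesis using True by simp
  qed simp
  ultimately show ?thesis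
    using sum.swap[of ?w V V] by (simp cong: sum.cong)
qed

section \<open>Idempotents summing to one\<close>

lemma idempotent_sum_orthogonal:
  fixes p q :: "'a::ring_1"
  assumes torsion_free: "\<And>m (x::'a). 0 < m \<Longrightarrow> of_nat m * x = 0 \<Longrightarrow> x = 0"
    and p: "p * p = p" and q: "q * q = q" and pq: "(p + q) * (p + q) = p + q"
  shows "p * q = 0"
proof -
  have anti: "p * q + q * p = 0"
    using pq p q by (simp add: algebra_simps)
  have "p * q + p * (q * p) = p * (p * q + q * p)"
    by (simp add: distrib_left mult.assoc[symmetric] p)
  moreover have "p * (q * p) + q * p = (p * q + q * p) * p"
    by (simp add: distrib_right mult.assoc p)
  ultimately have "p * q + p * (q * p) = 0" and "p * (q * p) + q * p = 0"
    using anti by simp_all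
  then have "p * q = q * p"
    by (metis add.commute add_right_cancel)
  then have "of_nat 2 * (p * q) = 0"
    using anti by (simp add: mult_2)
  then show ?thesis
    using torsion_free[of 2] by simp
qed

lemma idempotent_pair_sums_defect:
  fixes x :: "'b \<Rightarrow> 'a::ring_1"
  assumes P: "finite P" "4 \<le> card P" and a: "a \<in> P"
    and pair: "\<And>a b. a \<in> P \<Longrightarrow> b \<in> P \<Longrightarrow> a \<noteq> b \<Longrightarrow> (x a + x b) * (x a + x b) = x a + x b"
    and total: "(\<Sum>a\<in>P. x a) = 1"
  shows "of_nat (card P - 4) * (x a * x a - x a) + (\<Sum>b\<in>P. x b * x b - x b) = 0"
proof -
  let ?N = "card P" and ?Q = "P - {a}"
  define e where "e b = x b * x b - x b" for b
  define E where "E = (\<Sum>b\<in>P. e b)"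
  have rest: "(\<Sum>b\<in>?Q. x b) = 1 - x a"
    using P a total by (simp add: sum_diff1)
  have "0 = (\<Sum>b\<in>?Q. (x a + x b) * (x a + x b) - (x a + x b))"
    using pair a by (intro sum.neutral[symmetric]) auto
  also have "\<dots> = (\<Sum>b\<in>?Q. e a + e b + x a * x b + x b * x a)"
    by (intro sum.cong) (auto simp: e_def algebra_simps)
  also have "\<dots> = of_nat (?N - 1) * e a + (E - e a) + x a * (1 - x a) + (1 - x a) * x a"
  proof -
    have "(\<Sum>b\<in>?Q. e a) = of_nat (?N - 1) * e a"
      using P a by simp
    moreover have "(\<Sum>b\<in>?Q. e b) = E - e a"
      using P a by (simp add: E_def sum_diff1)
    moreover have "(\<Sum>b\<in>?Q. x a * x b) = x a * (1 - x a)"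
      by (simp only: sum_distrib_left[symmetric] rest)
    moreover have "(\<Sum>b\<in>?Q. x b * x a) = (1 - x a) * x a"
      by (simp only: sum_distrib_right[symmetric] rest)
    ultimately show ?thesis
      by (simp add: sum.distrib)
  qed
  also have "\<dots> = (of_nat (?N - 4) + 1 + 1 + 1) * e a + (E - e a) - e a - e a"
  proof -
    have "?N - 1 = (?N - 4) + 1 + 1 + 1" using P by simp
    then have "of_nat (?N - 1) = (of_nat (?N - 4) + 1 + 1 + 1 :: 'a)"
      by (metis of_nat_add of_nat_1)
    then show ?thesis by (simp add: e_def algebra_simps)
  qed
  also have "\<dots> = of_nat (?N - 4) * e a + E"
    by (simp add: algebra_simps)
  finally show ?thesis
    by (simp add: e_def E_def)
qed

lemma orthogonal_idempotents_of_idempotent_pair_sums: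
  fixes x :: "'b \<Rightarrow> 'a::ring_1"
  assumes torsion_free: "\<And>m (y::'a). 0 < m \<Longrightarrow> of_nat m * y = 0 \<Longrightarrow> y = 0"
    and P: "finite P" "5 \<le> card P"
    and pair: "\<And>a b. a \<in> P \<Longrightarrow> b \<in> P \<Longrightarrow> a \<noteq> b \<Longrightarrow> (x a + x b) * (x a + x b) = x a + x b"
    and total: "(\<Sum>a\<in>P. x a) = 1"
  shows "\<And>a. a \<in> P \<Longrightarrow> x a * x a = x a"
    and "\<And>a b. a \<in> P \<Longrightarrow> b \<in> P \<Longrightarrow> a \<noteq> b \<Longrightarrow> x a * x b = 0"
proof -
  let ?N = "card P"
  define e where "e a = x a * x a - x a" for a
  define E where "E = (\<Sum>a\<in>P. e a)"
  have defect: "of_nat (?N - 4) * e a + E = 0" if "a \<in> P" for a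
    using idempotent_pair_sums_defect[OF P(1) _ that pair total] P(2) by (simp add: e_def E_def)
  have "0 = (\<Sum>a\<in>P. of_nat (?N - 4) * e a + E)"
    using defect by simp
  also have "\<dots> = of_nat (?N - 4 + ?N) * E"
    by (simp add: sum.distrib E_def sum_distrib_left[symmetric] algebra_simps)
  finally have "E = 0"
    using torsion_free[of "?N - 4 + ?N" E] P by simp
  then have "e a = 0" if "a \<in> P" for a
    using defect[OF that] torsion_free[of "?N - 4" "e a"] P by simp
  then show idem': "x a * x a = x a" if "a \<in> P" for a
    using that by (simp add: e_def)
  show "x a * x b = 0" if "a \<in> P" "b \<in> P" "a \<noteq> b" for a b
  proof (rule idempotent_sum_orthogonal)
    show "\<And>m y. 0 < m \<Longrightarrow> of_nat m * y = 0 \<Longrightarrow> y = (0::'a)"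
      by (fact torsion_free)
  qed (use that idem' pair in auto)
qed

lemma commute_add: "(x::'a::semiring) * y = y * x \<Longrightarrow> x * z = z * x \<Longrightarrow> x * (y + z) = (y + z) * x"
  by (simp add: algebra_simps)

lemma commute_mult: "(x::'a::semigroup_mult) * y = y * x \<Longrightarrow> x * z = z * x \<Longrightarrow> x * (y * z) = (y * z) * x"
  by (metis mult.assoc)

lemma commute_of_exchange:
  fixes p q r s :: "'a::semiring_0"
  assumes p: "p * p = p" and "p * r = 0" "r * p = 0" "p * s = 0" "s * p = 0"
    and exchange: "p * q + r * s = s * r + q * p"
  shows "p * q = q * p"
proof -
  have "p * q = p * (p * q + r * s)"
    using p \<open>p * r = 0\<close> by (simp add: distrib_left mult.assoc[symmetric])
  also have "\<dots> = p * (s * r + q * p)"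
    by (simp only: exchange)
  also have "\<dots> = (p * q + r * s) * p"
  proof -
    have "p * (s * r) = 0" "r * (s * p) = 0"
      using \<open>p * s = 0\<close> \<open>s * p = 0\<close> by (simp_all add: mult.assoc[symmetric])
    then show ?thesis
      by (simp add: distrib_left distrib_right mult.assoc)
  qed
  also have "\<dots> = (s * r + q * p) * p"
    by (simp only: exchange)
  also have "\<dots> = q * p"
    using p \<open>r * p = 0\<close> by (simp add: distrib_right mult.assoc)
  finally show ?thesis .
qed

section \<open>Quantum automorphisms of the Johnson graph\<close>

definition star_sum :: "nat \<Rightarrow> (nat set \<Rightarrow> nat set \<Rightarrow> 'a::ring_1) \<Rightarrow> nat \<Rightarrow> nat set \<Rightarrow> 'a" where
  "star_sum n u c i = (\<Sum>j\<in>two_subsets n. if c \<in> j then u i j else 0)"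

definition star_block_sum :: "nat \<Rightarrow> (nat set \<Rightarrow> nat set \<Rightarrow> 'a::ring_1) \<Rightarrow> nat \<Rightarrow> nat \<Rightarrow> 'a" where
  "star_block_sum n u a c = (\<Sum>i\<in>two_subsets n. if a \<in> i then star_sum n u c i else 0)"

text \<open>The quantum permutation of the n points induced by u is
  v a c = (star_block_sum n u a c - 1) / (n - 2); the division is written with SOME, and the
  locale below assumes it is possible.\<close>

definition point_matrix :: "nat \<Rightarrow> (nat set \<Rightarrow> nat set \<Rightarrow> 'a::ring_1) \<Rightarrow> nat \<Rightarrow> nat \<Rightarrow> 'a" where
  "point_matrix n u a c = (SOME y. of_nat (n - 2) * y = star_block_sum n u a c - 1)"

lemma if_sum_distrib: "(if P then sum f A else 0) = (\<Sum>x\<in>A. if P then f x else 0)"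
  by simp

lemma star_block_sum_eq_double_sum:
  "star_block_sum n u a c = (\<Sum>i\<in>two_subsets n. \<Sum>j\<in>two_subsets n. if a \<in> i \<and> c \<in> j then u i j else 0)"
  unfolding star_block_sum_def star_sum_def if_sum_distrib by (simp add: if_if_eq_conj)

lemma star_block_sum_transpose: "star_block_sum n (\<lambda>i j. u j i) a c = star_block_sum n u c a"
  unfolding star_block_sum_eq_double_sum
  by (subst sum.swap) (simp add: conj_commute)

lemma point_matrix_transpose: "point_matrix n (\<lambda>i j. u j i) a c = point_matrix n u c a"
  using star_block_sum_transpose[of n u a c] by (simp add: point_matrix_def)

locale johnson_quantum_automorphism =
  fixes n :: nat and u :: "nat set \<Rightarrow> nat set \<Rightarrow> 'a::ring_1"
  assumes five_le: "5 \<le> n"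
    and magic: "magic_unitary (two_subsets n) u"
    and compatible: "adjacency_compatible (two_subsets n) johnson_adj u"
    and torsion_free: "\<And>m (x::'a). 0 < m \<Longrightarrow> of_nat m * x = 0 \<Longrightarrow> x = 0"
    and divisible: "\<And>m (y::'a). 0 < m \<Longrightarrow> \<exists>x. of_nat m * x = y"
begin

lemma transpose: "johnson_quantum_automorphism n (\<lambda>i j. u j i)"
proof
  show "magic_unitary (two_subsets n) (\<lambda>i j. u j i)"
    using magic by (rule magic_unitary_transpose[THEN iffD2])
  show "adjacency_compatible (two_subsets n) johnson_adj (\<lambda>i j. u j i)"
    using compatible by (rule adjacency_compatible_transpose[THEN iffD2])
qed (use five_le torsion_free divisible in auto)

lemma row_orthogonal:
  "i \<in> two_subsets n \<Longrightarrow> j \<in> two_subsets n \<Longrightarrow> j' \<in> two_subsets n \<Longrightarrow> j \<noteq> j' \<Longrightarrow>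
    u i j * u i j' = 0"
  by (rule adjacency_compatible_row_orthogonal[OF magic compatible symp_johnson_adj
        johnson_adj_separating[OF five_le]])

lemma sum_adjacent_star_sum:
  assumes i: "i \<in> two_subsets n" and c: "c \<in> {1..n}"
  shows "(\<Sum>i'\<in>two_subsets n. if johnson_adj i i' then star_sum n u c i' else 0)
    = of_nat (n - 4) * star_sum n u c i + 2"
proof -
  let ?V = "two_subsets n"
  have "(\<Sum>i'\<in>?V. if johnson_adj i i' then star_sum n u c i' else 0)
      = (\<Sum>i'\<in>?V. \<Sum>j\<in>?V. if johnson_adj i i' \<and> c \<in> j then u i' j else 0)"
    unfolding star_sum_def if_sum_distrib by (simp add: if_if_eq_conj)
  also have "\<dots> = (\<Sum>j\<in>?V. if c \<in> j then (\<Sum>i'\<in>?V. if johnson_adj i i' then u i' j else 0) else 0)"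
    unfolding if_sum_distrib by (subst sum.swap) (simp add: if_if_eq_conj conj_commute)
  also have "\<dots> = (\<Sum>j\<in>?V. if c \<in> j then (\<Sum>j'\<in>?V. if johnson_adj j j' then u i j' else 0) else 0)"
    using adjacency_compatible_adjacency_commute[OF magic compatible symp_johnson_adj i]
    by (intro sum.cong) auto
  also have "\<dots> = (\<Sum>j'\<in>?V. \<Sum>j\<in>?V. if c \<in> j \<and> johnson_adj j j' then u i j' else 0)"
    unfolding if_sum_distrib by (subst sum.swap) (simp add: if_if_eq_conj)
  also have "\<dots> = (\<Sum>j'\<in>?V. of_nat (card {j \<in> ?V. c \<in> j \<and> johnson_adj j j'}) * u i j')"
    by (simp add: sum.inter_filter[symmetric] finite_two_subsets)
  also have "\<dots> = (\<Sum>j'\<in>?V. of_nat (n - 4) * (if c \<in> j' then u i j' else 0) + 2 * u i j')"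
  proof (intro sum.cong refl)
    fix j' assume j': "j' \<in> ?V"
    have "n - 2 = (n - 4) + 2" using five_le by simp
    then have "of_nat (n - 2) = (of_nat (n - 4) + 2 :: 'a)"
      by (metis of_nat_add of_nat_numeral)
    then show "of_nat (card {j \<in> ?V. c \<in> j \<and> johnson_adj j j'}) * u i j'
        = of_nat (n - 4) * (if c \<in> j' then u i j' else 0) + 2 * u i j'"
      using card_star_johnson_adj[OF c j'] by (simp add: distrib_right)
  qed
  also have "\<dots> = of_nat (n - 4) * star_sum n u c i + 2"
    using magic_unitary_row_sum[OF magic i]
    by (simp add: star_sum_def sum.distrib sum_distrib_left[symmetric])
  finally show ?thesis .
qed

lemma star_block_sum_pair:
  assumes ab: "a \<noteq> b" "a \<in> {1..n}" "b \<in> {1..n}" and c: "c \<in> {1..n}"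
  shows "star_block_sum n u a c + star_block_sum n u b c = of_nat (n - 2) * star_sum n u c {a, b} + 2"
proof -
  let ?V = "two_subsets n" and ?Y = "star_sum n u c"
  have ab_mem: "{a, b} \<in> ?V"
    using ab by (rule doubleton_mem_two_subsets)
  have "star_block_sum n u a c + star_block_sum n u b c
      = (\<Sum>S\<in>?V. (if S = {a, b} then 2 * ?Y S else 0) + (if johnson_adj {a, b} S then ?Y S else 0))"
    unfolding star_block_sum_def sum.distrib[symmetric]
    by (intro sum.cong refl pair_membership_johnson_adj[OF ab(1)])
  also have "\<dots> = 2 * ?Y {a, b} + (of_nat (n - 4) * ?Y {a, b} + 2)"
    using ab_mem sum_adjacent_star_sum[OF ab_mem c]
    by (simp add: sum.distrib finite_two_subsets)
  also have "\<dots> = of_nat (n - 2) * ?Y {a, b} + 2"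
  proof -
    have "n - 2 = (n - 4) + 2" using five_le by simp
    then have "of_nat (n - 2) = (of_nat (n - 4) + 2 :: 'a)"
      by (metis of_nat_add of_nat_numeral)
    then show ?thesis by (simp add: algebra_simps)
  qed
  finally show ?thesis .
qed

lemma star_sum_mult:
  assumes i: "i \<in> two_subsets n"
  shows "star_sum n u c i * star_sum n u d i = (\<Sum>j\<in>two_subsets n. if c \<in> j \<and> d \<in> j then u i j else 0)"
proof -
  let ?V = "two_subsets n"
  have "star_sum n u c i * star_sum n u d i
      = (\<Sum>j\<in>?V. \<Sum>j'\<in>?V. (if c \<in> j then u i j else 0) * (if d \<in> j' then u i j' else 0))"
    unfolding star_sum_def by (rule sum_product)
  also have "\<dots> = (\<Sum>j\<in>?V. \<Sum>j'\<in>?V. if j' = j then (if c \<in> j \<and> d \<in> j then u i j else 0) else 0)"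
    using magic_unitary_idem[OF magic i] row_orthogonal[OF i]
    by (intro sum.cong refl) auto
  also have "\<dots> = (\<Sum>j\<in>?V. if c \<in> j \<and> d \<in> j then u i j else 0)"
    by (simp add: finite_two_subsets)
  finally show ?thesis .
qed

lemma star_sum_idem:
  assumes "i \<in> two_subsets n"
  shows "star_sum n u c i * star_sum n u c i = star_sum n u c i"
  unfolding star_sum_mult[OF assms] by (simp add: star_sum_def)

lemma star_sum_mult_distinct:
  assumes i: "i \<in> two_subsets n" and cd: "c \<noteq> d" "c \<in> {1..n}" "d \<in> {1..n}"
  shows "star_sum n u c i * star_sum n u d i = u i {c, d}"
proof -
  have pair: "c \<in> j \<and> d \<in> j \<longleftrightarrow> j = {c, d}" if "j \<in> two_subsets n" for j
    using that cd by (auto simp: mem_two_subsets_iff doubleton_eq_iff)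
  have "star_sum n u c i * star_sum n u d i
      = (\<Sum>j\<in>two_subsets n. if c \<in> j \<and> d \<in> j then u i j else 0)"
    by (rule star_sum_mult[OF i])
  also have "\<dots> = (\<Sum>j\<in>two_subsets n. if j = {c, d} then u i j else 0)"
    using pair by (intro sum.cong) auto
  also have "\<dots> = u i {c, d}"
    using doubleton_mem_two_subsets[OF cd] by (simp add: finite_two_subsets)
  finally show ?thesis .
qed

lemma of_nat_mult_point_matrix:
  "of_nat (n - 2) * point_matrix n u a c = star_block_sum n u a c - 1"
proof -
  have "\<exists>y. of_nat (n - 2) * y = star_block_sum n u a c - 1"
    using five_le by (intro divisible) simp
  then show ?thesis
    unfolding point_matrix_def by (rule someI_ex)
qed

lemma point_matrix_pair_sum:
  assumes ab: "a \<noteq> b" "a \<in> {1..n}" "b \<in> {1..n}" and c: "c \<in> {1..n}"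
  shows "point_matrix n u a c + point_matrix n u b c = star_sum n u c {a, b}"
proof -
  have "of_nat (n - 2) * (point_matrix n u a c + point_matrix n u b c - star_sum n u c {a, b})
      = (star_block_sum n u a c - 1) + (star_block_sum n u b c - 1) - of_nat (n - 2) * star_sum n u c {a, b}"
    by (simp only: distrib_left right_diff_distrib of_nat_mult_point_matrix)
  also have "\<dots> = (star_block_sum n u a c + star_block_sum n u b c) - (of_nat (n - 2) * star_sum n u c {a, b} + 2)"
    by (simp add: algebra_simps)
  also have "\<dots> = 0"
    by (simp only: star_block_sum_pair[OF ab c] diff_self)
  finally have "of_nat (n - 2) * (point_matrix n u a c + point_matrix n u b c - star_sum n u c {a, b}) = 0" .
  from torsion_free[OF _ this] five_le
  have "point_matrix n u a c + point_matrix n u b c - star_sum n u c {a, b} = 0"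
    by simp
  then show ?thesis by simp
qed

lemma sum_point_matrix_col:
  assumes c: "c \<in> {1..n}"
  shows "(\<Sum>a\<in>{1..n}. point_matrix n u a c) = 1"
proof -
  let ?v = "\<lambda>a. point_matrix n u a c" and ?S = "\<Sum>a\<in>{1..n}. point_matrix n u a c"
  have one: "1 \<in> {1..n}" using five_le by simp
  have "star_block_sum n u 1 c = (\<Sum>b\<in>{1..n} - {1}. star_sum n u c {1, b})"
    unfolding star_block_sum_def by (rule sum_star[OF one])
  also have "\<dots> = (\<Sum>b\<in>{1..n} - {1}. ?v 1 + ?v b)"
    using one c by (intro sum.cong refl point_matrix_pair_sum[symmetric]) auto
  also have "\<dots> = of_nat (n - 1) * ?v 1 + (?S - ?v 1)"
    using one by (simp add: sum.distrib sum_diff1)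
  also have "\<dots> = (of_nat (n - 2) * ?v 1) + ?S"
  proof -
    have "n - 1 = (n - 2) + 1" using five_le by simp
    then have "of_nat (n - 1) = (of_nat (n - 2) + 1 :: 'a)"
      by (metis of_nat_add of_nat_1)
    then show ?thesis by (simp add: algebra_simps)
  qed
  also have "\<dots> = star_block_sum n u 1 c + (?S - 1)"
    by (simp only: of_nat_mult_point_matrix diff_add_eq add_diff_eq)
  finally have "?S - 1 = 0"
    by (metis add_cancel_left_right)
  then show ?thesis by simp
qed

lemma point_matrix_col_orthogonal_idempotents:
  assumes c: "c \<in> {1..n}"
  shows "\<And>a. a \<in> {1..n} \<Longrightarrow> point_matrix n u a c * point_matrix n u a c = point_matrix n u a c"
    and "\<And>a b. a \<in> {1..n} \<Longrightarrow> b \<in> {1..n} \<Longrightarrow> a \<noteq> b \<Longrightarrow>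
      point_matrix n u a c * point_matrix n u b c = 0"
proof -
  let ?x = "\<lambda>a. point_matrix n u a c"
  have card: "5 \<le> card {1..n}"
    using five_le by simp
  have pair: "(?x a + ?x b) * (?x a + ?x b) = ?x a + ?x b"
    if "a \<in> {1..n}" "b \<in> {1..n}" "a \<noteq> b" for a b
    using that c by (simp add: point_matrix_pair_sum star_sum_idem doubleton_mem_two_subsets)
  note projections = orthogonal_idempotents_of_idempotent_pair_sums[of "{1..n}" ?x,
      OF torsion_free finite_atLeastAtMost card pair sum_point_matrix_col[OF c]]
  show "\<And>a. a \<in> {1..n} \<Longrightarrow> ?x a * ?x a = ?x a"
    by (rule projections(1))
  show "\<And>a b. a \<in> {1..n} \<Longrightarrow> b \<in> {1..n} \<Longrightarrow> a \<noteq> b \<Longrightarrow> ?x a * ?x b = 0"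
    by (rule projections(2))
qed

lemma point_matrix_row_orthogonal:
  assumes "a \<in> {1..n}" "c \<in> {1..n}" "d \<in> {1..n}" "c \<noteq> d"
  shows "point_matrix n u a c * point_matrix n u a d = 0"
  using johnson_quantum_automorphism.point_matrix_col_orthogonal_idempotents(2)[OF transpose assms(1-4)]
  by (simp only: point_matrix_transpose[of n u])

lemma entry_eq_point_matrix_product:
  assumes "a \<noteq> b" "a \<in> {1..n}" "b \<in> {1..n}" and "c \<noteq> d" "c \<in> {1..n}" "d \<in> {1..n}"
  shows "u {a, b} {c, d}
    = (point_matrix n u a c + point_matrix n u b c) * (point_matrix n u a d + point_matrix n u b d)"
proof -
  have "{a, b} \<in> two_subsets n"
    using assms(1-3) by (rule doubleton_mem_two_subsets)
  then have "u {a, b} {c, d} = star_sum n u c {a, b} * star_sum n u d {a, b}"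
    using star_sum_mult_distinct assms(4-6) by simp
  then show ?thesis
    using assms by (simp add: point_matrix_pair_sum)
qed

lemma point_matrix_commute:
  assumes a: "a \<in> {1..n}" and b: "b \<in> {1..n}" and c: "c \<in> {1..n}" and d: "d \<in> {1..n}"
  shows "point_matrix n u a c * point_matrix n u b d = point_matrix n u b d * point_matrix n u a c"
proof -
  let ?v = "point_matrix n u"
  consider "a = b" | "c = d" | "a \<noteq> b" "c \<noteq> d" by blast
  then show ?thesis
  proof cases
    case 1
    then show ?thesis
      using point_matrix_row_orthogonal[OF a c d] point_matrix_row_orthogonal[OF a d c]
      by (cases "c = d") auto
  next
    case 2
    then show ?thesis
      using point_matrix_col_orthogonal_idempotents(2)[OF c a b]
        point_matrix_col_orthogonal_idempotents(2)[OF c b a]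
      by (cases "a = b") auto
  next
    case 3
    let ?p = "?v a c" and ?q = "?v b d" and ?r = "?v b c" and ?s = "?v a d"
    have "(?p + ?r) * (?s + ?q) = (?s + ?q) * (?p + ?r)"
      using entry_eq_point_matrix_product[OF 3(1) a b 3(2) c d]
        entry_eq_point_matrix_product[OF 3(1) a b 3(2)[symmetric] d c]
      by (simp add: insert_commute)
    moreover have "?p * ?s = 0" "?r * ?q = 0" "?s * ?p = 0" "?q * ?r = 0"
      using point_matrix_row_orthogonal 3 a b c d by auto
    ultimately have "?p * ?q + ?r * ?s = ?s * ?r + ?q * ?p"
      by (simp add: algebra_simps)
    then show ?thesis
      by (rule commute_of_exchange[OF point_matrix_col_orthogonal_idempotents(1)[OF c a]
            point_matrix_col_orthogonal_idempotents(2)[OF c a b 3(1)]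
            point_matrix_col_orthogonal_idempotents(2)[OF c b a 3(1)[symmetric]]
            \<open>?p * ?s = 0\<close> \<open>?s * ?p = 0\<close>])
  qed
qed

lemma entries_commute:
  assumes "i \<in> two_subsets n" "j \<in> two_subsets n" "k \<in> two_subsets n" "l \<in> two_subsets n"
  shows "u i j * u k l = u k l * u i j"
proof -
  let ?v = "point_matrix n u"
  have product: "\<exists>a b c d. a \<in> {1..n} \<and> b \<in> {1..n} \<and> c \<in> {1..n} \<and> d \<in> {1..n} \<and>
      u i j = (?v a c + ?v b c) * (?v a d + ?v b d)"
    if "i \<in> two_subsets n" "j \<in> two_subsets n" for i j
    using that entry_eq_point_matrix_product unfolding mem_two_subsets_iff by blast
  have commutes_point_matrix: "?v a c * u k l = u k l * ?v a c"
    if "a \<in> {1..n}" "c \<in> {1..n}" for a c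
    using product[OF assms(3,4)] that
    by (auto intro!: commute_mult commute_add point_matrix_commute)
  have "u k l * u i j = u i j * u k l"
    using product[OF assms(1,2)]
    by (auto intro!: commute_mult commute_add commutes_point_matrix[symmetric])
  then show ?thesis ..
qed

end

lemma kneser_compatible_imp_johnson_compatible:
  assumes "5 \<le> n" and magic: "magic_unitary (two_subsets n) u"
    and kneser: "adjacency_compatible (two_subsets n) kneser_adj u"
  shows "adjacency_compatible (two_subsets n) johnson_adj u"
proof (rule adjacency_compatible_complement[OF kneser])
  note hyps = magic kneser symp_kneser_adj kneser_adj_separating[OF assms(1)]
  show "u i j * u i j' = 0"
    if "i \<in> two_subsets n" "j \<in> two_subsets n" "j' \<in> two_subsets n" "j \<noteq> j'" for i j j'
    by (rule adjacency_compatible_row_orthogonal[OF hyps that])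
  show "u i j * u i' j = 0"
    if "i \<in> two_subsets n" "i' \<in> two_subsets n" "j \<in> two_subsets n" "i \<noteq> i'" for i i' j
    by (rule adjacency_compatible_col_orthogonal[OF hyps that])
qed (use johnson_adj_iff_not_kneser_adj johnson_adj_irrefl kneser_adj_irrefl in auto)

section \<open>Division by integers in a unital C*-algebra\<close>

context unital_cstar_algebra
begin

lemma smult_zero_left: "smult 0 x = 0"
  using smult_add_left[of 0 0 x] by simp

lemma smult_zero_right: "smult c 0 = 0"
  using smult_add_right[of c 0 0] by simp

lemma smult_of_nat: "smult (of_nat m) x = of_nat m * x"
proof (induction m)
  case 0
  then show ?case by (simp add: smult_zero_left)
next
  case (Suc m)
  then show ?case
    using smult_add_left[of "of_nat m" 1 x] by (simp add: smult_one algebra_simps)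
qed

lemma of_nat_mult_eq_zero_imp:
  fixes x :: 'a
  assumes "0 < m" and "of_nat m * x = 0"
  shows "x = 0"
proof -
  have "x = smult (1 / of_nat m) (smult (of_nat m) x)"
    using assms(1) by (simp add: smult_smult smult_one)
  then show ?thesis
    using assms(2) by (simp add: smult_of_nat smult_zero_right)
qed

lemma ex_of_nat_mult_eq:
  fixes y :: 'a
  assumes "0 < m"
  shows "\<exists>x. of_nat m * x = y"
proof
  show "of_nat m * smult (1 / of_nat m) y = y"
    using assms by (simp add: smult_of_nat[symmetric] smult_smult smult_one)
qed

lemma johnson_quantum_automorphismI:
  fixes u :: "nat set \<Rightarrow> nat set \<Rightarrow> 'a"
  assumes "5 \<le> n" and "magic_unitary (two_subsets n) u"
    and "adjacency_compatible (two_subsets n) johnson_adj u"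
  shows "johnson_quantum_automorphism n u"
  using assms by unfold_locales (auto intro: of_nat_mult_eq_zero_imp ex_of_nat_mult_eq)

end

theorem theorem1p3:
  fixes n :: nat
  assumes "n \<ge> 5"
  shows "no_quantum_symmetry TYPE('a::ring_1) (two_subsets n) johnson_adj
       \<and> no_quantum_symmetry TYPE('a::ring_1) (two_subsets n) kneser_adj"
proof -
  have "no_quantum_symmetry TYPE('a) (two_subsets n) E"
    if E: "E = johnson_adj \<or> E = kneser_adj" for E
    unfolding no_quantum_symmetry_def
  proof (intro allI impI ballI)
    fix smult invol nrm and u :: "nat set \<Rightarrow> nat set \<Rightarrow> 'a" and i j k l
    assume cstar: "unital_cstar_algebra smult invol nrm"
      and rel: "qaut_relations invol (two_subsets n) E u"
      and entries: "i \<in> two_subsets n" "j \<in> two_subsets n" "k \<in> two_subsets n" "l \<in> two_subsets n"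
    have magic: "magic_unitary (two_subsets n) u"
      using rel by (rule qaut_relationsD)
    have "adjacency_compatible (two_subsets n) johnson_adj u"
      using E qaut_relationsD(2)[OF rel] kneser_compatible_imp_johnson_compatible[OF assms magic]
      by blast
    then interpret johnson_quantum_automorphism n u
      using unital_cstar_algebra.johnson_quantum_automorphismI[OF cstar assms magic] by simp
    show "u i j * u k l = u k l * u i j"
      using entries by (rule entries_commute)
  qed
  then show ?thesis by blast
qed

end
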